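(* Let $G$ be a fullerene graph and $S$ a perfect star packing of $G$. If a pentagonal face $P$ of $G$ has a vertex $x\in C(S)$, then $G-C(S)$ contains a cycle $C$ which is not the boundary of a face of $G$ such that the path $P-x$ is a subgraph of $C$.
   Context: A fullerene graph is a finite simple connected (equivalently, $3$-connected) plane cubic graph all of whose faces are pentagons or hexagons. A perfect star packing of $G$ is a spanning subgraph $S$ of $G$ every connected component of which is isomorphic to $K_{1,3}$; $C(S)$ denotes the set of centers (degree-$3$ vertices) of the stars in $S$. A cycle of $G$ is facial if it bounds a face of $G$, and non-facial otherwise. *)

theory Defs
  imports Main
begin

definition simple_graph :: "'v set \<Rightarrow> 'v set set \<Rightarrow> bool" where
  "simple_graph V E \<longleftrightarrow> finite V \<and>
     (\<forall>e\<in>E. \<exists>a b. a \<noteq> b \<and> a \<in> V \<and> b \<in> V \<and> e = {a, b})"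

definition nbrs :: "'v set set \<Rightarrow> 'v \<Rightarrow> 'v set" where
  "nbrs E v = {w. w \<noteq> v \<and> {v, w} \<in> E}"

definition adj_rel :: "'v set set \<Rightarrow> ('v \<times> 'v) set" where
  "adj_rel E = {(a, b). a \<noteq> b \<and> {a, b} \<in> E}"

definition connected_graph :: "'v set \<Rightarrow> 'v set set \<Rightarrow> bool" where
  "connected_graph V E \<longleftrightarrow> V \<noteq> {} \<and> (\<forall>a\<in>V. \<forall>b\<in>V. (a, b) \<in> (adj_rel E)\<^sup>*)"

definition cubic :: "'v set \<Rightarrow> 'v set set \<Rightarrow> bool" where
  "cubic V E \<longleftrightarrow> (\<forall>v\<in>V. card (nbrs E v) = 3)"

definition darts :: "'v set \<Rightarrow> 'v set set \<Rightarrow> ('v \<times> 'v) set" where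
  "darts V E = {(a, b). a \<in> V \<and> b \<in> V \<and> a \<noteq> b \<and> {a, b} \<in> E}"

(* Rotation system (combinatorial embedding): for each vertex v, rot v is a cyclic
   permutation of the neighbours of v (the cyclic order of edges around v). *)
definition rotation_system :: "'v set \<Rightarrow> 'v set set \<Rightarrow> ('v \<Rightarrow> 'v \<Rightarrow> 'v) \<Rightarrow> bool" where
  "rotation_system V E rot \<longleftrightarrow>
     (\<forall>v\<in>V. bij_betw (rot v) (nbrs E v) (nbrs E v) \<and>
        (\<forall>w\<in>nbrs E v. nbrs E v = {(rot v ^^ k) w | k. True}))"

definition face_step :: "('v \<Rightarrow> 'v \<Rightarrow> 'v) \<Rightarrow> 'v \<times> 'v \<Rightarrow> 'v \<times> 'v" where
  "face_step rot d = (snd d, rot (snd d) (fst d))"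

definition face_orbit :: "('v \<Rightarrow> 'v \<Rightarrow> 'v) \<Rightarrow> 'v \<times> 'v \<Rightarrow> ('v \<times> 'v) set" where
  "face_orbit rot d = {(face_step rot ^^ k) d | k. True}"

(* Faces = orbits of the face permutation; the length of a face is the size of its orbit. *)
definition faces :: "'v set \<Rightarrow> 'v set set \<Rightarrow> ('v \<Rightarrow> 'v \<Rightarrow> 'v) \<Rightarrow> ('v \<times> 'v) set set" where
  "faces V E rot = face_orbit rot ` darts V E"

definition face_verts :: "('v \<times> 'v) set \<Rightarrow> 'v set" where
  "face_verts F = fst ` F"

definition face_edges :: "('v \<times> 'v) set \<Rightarrow> 'v set set" where
  "face_edges F = (\<lambda>(a, b). {a, b}) ` F"

(* A connected simple graph with a rotation system of genus 0 (Euler: V - E + F = 2),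
   i.e. a plane graph given combinatorially. *)
definition plane_graph :: "'v set \<Rightarrow> 'v set set \<Rightarrow> ('v \<Rightarrow> 'v \<Rightarrow> 'v) \<Rightarrow> bool" where
  "plane_graph V E rot \<longleftrightarrow> simple_graph V E \<and> connected_graph V E \<and> rotation_system V E rot \<and>
     int (card V) - int (card E) + int (card (faces V E rot)) = 2"

definition fullerene :: "'v set \<Rightarrow> 'v set set \<Rightarrow> ('v \<Rightarrow> 'v \<Rightarrow> 'v) \<Rightarrow> bool" where
  "fullerene V E rot \<longleftrightarrow> plane_graph V E rot \<and> cubic V E \<and>
     (\<forall>F\<in>faces V E rot. card F = 5 \<or> card F = 6)"

definition component :: "'v set \<Rightarrow> 'v set set \<Rightarrow> 'v \<Rightarrow> 'v set" where
  "component V S v = {w\<in>V. (v, w) \<in> (adj_rel S)\<^sup>*}"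

definition is_K13 :: "'v set \<Rightarrow> 'v set set \<Rightarrow> bool" where
  "is_K13 W S \<longleftrightarrow> card W = 4 \<and>
     (\<exists>c\<in>W. {e\<in>S. e \<subseteq> W} = {{c, w} | w. w \<in> W - {c}})"

definition perfect_star_packing :: "'v set \<Rightarrow> 'v set set \<Rightarrow> 'v set set \<Rightarrow> bool" where
  "perfect_star_packing V E S \<longleftrightarrow> S \<subseteq> E \<and> (\<forall>v\<in>V. is_K13 (component V S v) S)"

definition centers :: "'v set \<Rightarrow> 'v set set \<Rightarrow> 'v set" where
  "centers V S = {v\<in>V. card (nbrs S v) = 3}"

definition is_cycle :: "'v set set \<Rightarrow> 'v list \<Rightarrow> bool" where
  "is_cycle E vs \<longleftrightarrow> length vs \<ge> 3 \<and> distinct vs \<and>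
     (\<forall>i<length vs. {vs ! i, vs ! ((i + 1) mod length vs)} \<in> E)"

definition cycle_edges :: "'v list \<Rightarrow> 'v set set" where
  "cycle_edges vs = {{vs ! i, vs ! ((i + 1) mod length vs)} | i. i < length vs}"

definition facial_cycle :: "'v set \<Rightarrow> 'v set set \<Rightarrow> ('v \<Rightarrow> 'v \<Rightarrow> 'v) \<Rightarrow> 'v list \<Rightarrow> bool" where
  "facial_cycle V E rot vs \<longleftrightarrow> (\<exists>F\<in>faces V E rot. cycle_edges vs = face_edges F)"

end

theory Submission
  imports Defs
begin

text \<open>In a cubic graph the centers of a perfect star packing meet every closed neighbourhood
  exactly once. Hence no two centers are adjacent and every non-center has exactly two non-center
  neighbours, so \<open>G - C(S)\<close> is 2-regular. On the pentagon \<open>x a b c e\<close> the neighbours \<open>a, e\<close> of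
  the center \<open>x\<close> are non-centers, and so are \<open>b, c\<close>, each sharing a neighbour with \<open>x\<close>; thus
  the path \<open>a b c e\<close> runs inside \<open>G - C(S)\<close> and closes up there to a cycle. This cycle is not
  facial: of the two faces along \<open>bc\<close>, one is the pentagon, which contains \<open>x\<close>, and the other
  leaves \<open>b\<close> through its third neighbour, which the cycle avoids.\<close>

lemma simple_graph_edgeD:
  assumes "simple_graph V E" "{u, v} \<in> E"
  shows "u \<in> V" "v \<in> V" "u \<noteq> v"
  using assms unfolding simple_graph_def by (auto simp: doubleton_eq_iff)

lemma nbrs_sym: "w \<in> nbrs E v \<longleftrightarrow> v \<in> nbrs E w"
  unfolding nbrs_def by (auto simp: insert_commute)

lemma nbrs_subset:
  assumes "simple_graph V E"
  shows "nbrs E v \<subseteq> V"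
proof
  fix w assume "w \<in> nbrs E v"
  then have "{v, w} \<in> E" by (simp add: nbrs_def)
  then show "w \<in> V" by (rule simple_graph_edgeD(2)[OF assms])
qed

lemma card_eq_2_no_three:
  assumes "card A = 2" "u \<in> A" "v \<in> A" "w \<in> A"
  shows "u = v \<or> u = w \<or> v = w"
  using assms by (auto simp: card_2_iff)

section \<open>Paths and cycles\<close>

definition is_path :: "'v set set \<Rightarrow> 'v list \<Rightarrow> bool" where
  "is_path E vs \<longleftrightarrow> distinct vs \<and> (\<forall>i. Suc i < length vs \<longrightarrow> {vs ! i, vs ! Suc i} \<in> E)"

lemma is_path_snoc:
  assumes "is_path E vs" "vs \<noteq> []" "z \<notin> set vs" "{last vs, z} \<in> E"
  shows "is_path E (vs @ [z])"
  unfolding is_path_def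
proof (intro conjI allI impI)
  show "distinct (vs @ [z])" using assms(1,3) unfolding is_path_def by simp
  fix i assume i: "Suc i < length (vs @ [z])"
  show "{(vs @ [z]) ! i, (vs @ [z]) ! Suc i} \<in> E"
  proof (cases "Suc i < length vs")
    case True
    then show ?thesis using assms(1) unfolding is_path_def by (simp add: nth_append)
  next
    case False
    then have "i = length vs - 1" using i by simp
    then show ?thesis using assms(2,4) by (simp add: nth_append last_conv_nth)
  qed
qed

lemma is_cycle_if_closing_path:
  assumes "is_path E vs" "3 \<le> length vs" "{last vs, hd vs} \<in> E"
  shows "is_cycle E vs"
  unfolding is_cycle_def
proof (intro conjI allI impI)
  show "3 \<le> length vs" "distinct vs" using assms(1,2) unfolding is_path_def by auto
  fix i assume i: "i < length vs"
  show "{vs ! i, vs ! ((i + 1) mod length vs)} \<in> E"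
  proof (cases "Suc i < length vs")
    case True
    then show ?thesis using assms(1) unfolding is_path_def by simp
  next
    case False
    then have "i = length vs - 1" "Suc i = length vs" using i by simp_all
    moreover have "vs \<noteq> []" using assms(2) by auto
    ultimately show ?thesis using assms(3) by (simp add: last_conv_nth hd_conv_nth)
  qed
qed

lemma path_edge_in_cycle_edges:
  "Suc i < length vs \<Longrightarrow> {vs ! i, vs ! Suc i} \<in> cycle_edges vs"
  unfolding cycle_edges_def by force

lemma cycle_edges_memD:
  assumes "{u, v} \<in> cycle_edges vs"
  shows "u \<in> set vs"
proof -
  obtain i where i: "i < length vs" "{u, v} = {vs ! i, vs ! ((i + 1) mod length vs)}"
    using assms unfolding cycle_edges_def by auto
  moreover have "(i + 1) mod length vs < length vs" using i(1) by (intro mod_less_divisor) linarith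
  ultimately have "vs ! i \<in> set vs" "vs ! ((i + 1) mod length vs) \<in> set vs" by auto
  then show ?thesis using i(2) by (auto simp: doubleton_eq_iff)
qed

lemma maximal_path_extension:
  assumes fin: "finite U" and p0: "is_path E p0" "set p0 \<subseteq> U" "p0 \<noteq> []"
  obtains q where "is_path E (p0 @ q)" "set (p0 @ q) \<subseteq> U"
    and "nbrs E (last (p0 @ q)) \<inter> U \<subseteq> set (p0 @ q)"
proof -
  define Ext where "Ext = {p. is_path E p \<and> set p \<subseteq> U \<and> (\<exists>q. p = p0 @ q)}"
  have "length p < Suc (card U)" if "p \<in> Ext" for p
  proof -
    have "distinct p" "set p \<subseteq> U" using that unfolding Ext_def is_path_def by auto
    then have "length p \<le> card U" using card_mono[OF fin] distinct_card by metis
    then show ?thesis by simp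
  qed
  moreover have "p0 \<in> Ext" using p0 unfolding Ext_def by auto
  ultimately obtain p where "p \<in> Ext" and longest: "\<And>p'. p' \<in> Ext \<Longrightarrow> length p' \<le> length p"
    using ex_has_greatest_nat[of "\<lambda>p. p \<in> Ext" p0 length] by blast
  then obtain q where p: "p = p0 @ q" "is_path E p" "set p \<subseteq> U" unfolding Ext_def by blast
  have "z \<in> set p" if z: "z \<in> nbrs E (last p) \<inter> U" for z
  proof (rule ccontr)
    assume "z \<notin> set p"
    then have "is_path E (p @ [z])"
      using is_path_snoc[OF p(2)] z p0(3) p(1) unfolding nbrs_def by simp
    then have "p @ [z] \<in> Ext" using p z unfolding Ext_def by auto
    then show False using longest by fastforce
  qed
  then show ?thesis using that p by blast
qed

text \<open>Closing a maximal path works because an interior vertex already has both of its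
  \<open>U\<close>-neighbours on the path, so the last vertex can only be adjacent to the first one.\<close>

lemma maximal_path_closes:
  assumes deg: "\<And>u. u \<in> U \<Longrightarrow> card (nbrs E u \<inter> U) = 2"
    and p: "is_path E p" "set p \<subseteq> U" "3 \<le> length p"
    and maximal: "nbrs E (last p) \<inter> U \<subseteq> set p"
  shows "{last p, hd p} \<in> E"
proof -
  define L where "L = length p"
  have distinct: "distinct p" and edge: "\<And>i. Suc i < L \<Longrightarrow> {p ! i, p ! Suc i} \<in> E"
    using p(1) unfolding is_path_def L_def by auto
  have "p \<noteq> []" using p(3) by auto
  then have last_p: "last p = p ! (L - 1)" and hd_p: "hd p = p ! 0"
    unfolding L_def by (simp_all add: last_conv_nth hd_conv_nth)
  have in_U: "p ! i \<in> U" if "i < L" for i using that p(2) nth_mem unfolding L_def by blast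
  have last_U: "last p \<in> U" using p(2) \<open>p \<noteq> []\<close> by auto
  have succ_nbr: "p ! Suc i \<in> nbrs E (p ! i)" if "Suc i < L" for i
  proof -
    have "p ! Suc i \<noteq> p ! i" using that distinct by (simp add: nth_eq_iff_index_eq L_def)
    then show ?thesis using edge[OF that] unfolding nbrs_def by simp
  qed
  have "\<not> nbrs E (last p) \<inter> U \<subseteq> {p ! (L - 2)}"
  proof
    assume "nbrs E (last p) \<inter> U \<subseteq> {p ! (L - 2)}"
    then have "card (nbrs E (last p) \<inter> U) \<le> 1" using card_mono[of "{p ! (L - 2)}"] by fastforce
    then show False using deg[OF last_U] by simp
  qed
  then obtain z where z: "z \<in> nbrs E (last p) \<inter> U" "z \<noteq> p ! (L - 2)" by blast
  then have "z \<in> set p" using maximal by blast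
  then obtain j where j: "j < L" "p ! j = z" by (auto simp: in_set_conv_nth L_def)
  have "j = 0"
  proof (rule ccontr)
    assume "j \<noteq> 0"
    moreover have "j \<noteq> L - 1" using z(1) j(2) unfolding last_p nbrs_def by auto
    moreover have "j \<noteq> L - 2" using z(2) j(2) by auto
    ultimately have interior: "0 < j" "Suc j < L - 1" using j(1) by auto
    then have "p ! (j - 1) \<in> nbrs E z \<inter> U" "p ! Suc j \<in> nbrs E z \<inter> U" "last p \<in> nbrs E z \<inter> U"
      using succ_nbr[of "j - 1"] succ_nbr[of j] j z(1) in_U[of "j - 1"] in_U[of "Suc j"] last_U
      by (auto simp: nbrs_sym)
    moreover have "p ! (j - 1) \<noteq> p ! Suc j" "p ! (j - 1) \<noteq> last p" "p ! Suc j \<noteq> last p"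
      using distinct interior unfolding last_p L_def by (auto simp: nth_eq_iff_index_eq)
    ultimately show False using card_eq_2_no_three[OF deg[of z]] z(1) by auto
  qed
  then show ?thesis using j z(1) unfolding hd_p nbrs_def by (simp add: insert_commute)
qed

lemma path_extends_to_cycle:
  assumes fin: "finite U" and deg: "\<And>u. u \<in> U \<Longrightarrow> card (nbrs E u \<inter> U) = 2"
    and p0: "is_path E p0" "set p0 \<subseteq> U" "3 \<le> length p0"
  shows "\<exists>q. is_cycle E (p0 @ q) \<and> set (p0 @ q) \<subseteq> U"
proof -
  have "p0 \<noteq> []" using p0(3) by auto
  then obtain q where q: "is_path E (p0 @ q)" "set (p0 @ q) \<subseteq> U"
    and maximal: "nbrs E (last (p0 @ q)) \<inter> U \<subseteq> set (p0 @ q)"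
    using maximal_path_extension[OF fin p0(1,2)] by blast
  moreover have "3 \<le> length (p0 @ q)" using p0(3) by simp
  ultimately show ?thesis
    using is_cycle_if_closing_path maximal_path_closes[OF deg] by blast
qed

section \<open>Rotation systems and faces\<close>

lemma rot_in_nbrs:
  "rotation_system V E rot \<Longrightarrow> v \<in> V \<Longrightarrow> w \<in> nbrs E v \<Longrightarrow> rot v w \<in> nbrs E v"
  unfolding rotation_system_def by (auto intro: bij_betw_apply)

lemma inj_on_rot: "rotation_system V E rot \<Longrightarrow> v \<in> V \<Longrightarrow> inj_on (rot v) (nbrs E v)"
  unfolding rotation_system_def bij_betw_def by blast

lemma rot_rot_neq_self:
  assumes rs: "rotation_system V E rot" and v: "v \<in> V" and w: "w \<in> nbrs E v"
    and deg: "2 < card (nbrs E v)"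
  shows "rot v (rot v w) \<noteq> w"
proof
  assume period2: "rot v (rot v w) = w"
  have "(rot v ^^ k) w \<in> {w, rot v w}" for k
    by (induction k) (auto simp: period2)
  moreover have "nbrs E v = {(rot v ^^ k) w | k. True}"
    using rs v w unfolding rotation_system_def by blast
  ultimately have "nbrs E v \<subseteq> {w, rot v w}" by auto
  then have "card (nbrs E v) \<le> card {w, rot v w}"
    by (intro card_mono) auto
  also have "\<dots> \<le> 2" by (simp add: card_insert_if)
  finally show False using deg by simp
qed

lemma rot_neq_self:
  assumes "rotation_system V E rot" "v \<in> V" "w \<in> nbrs E v" "2 < card (nbrs E v)"
  shows "rot v w \<noteq> w"
  using rot_rot_neq_self[OF assms] by auto

lemma darts_iff: "(a, b) \<in> darts V E \<longleftrightarrow> b \<in> V \<and> a \<in> nbrs E b \<and> a \<in> V"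
  unfolding darts_def nbrs_def by (auto simp: insert_commute)

lemma face_step_in_darts:
  assumes sg: "simple_graph V E" and rs: "rotation_system V E rot" and d: "d \<in> darts V E"
  shows "face_step rot d \<in> darts V E"
proof -
  obtain a b where ab: "d = (a, b)" by force
  then have "b \<in> V" "a \<in> nbrs E b" using d by (auto simp: darts_iff)
  then have "rot b a \<in> nbrs E b" by (rule rot_in_nbrs[OF rs])
  moreover from this have "rot b a \<in> V" using nbrs_subset[OF sg] by blast
  ultimately show ?thesis
    using \<open>b \<in> V\<close> unfolding ab face_step_def by (simp add: darts_iff nbrs_sym)
qed

lemma inj_on_face_step:
  assumes rs: "rotation_system V E rot"
  shows "inj_on (face_step rot) (darts V E)"
proof (rule inj_onI)
  fix d d' assume d: "d \<in> darts V E" and d': "d' \<in> darts V E"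
    and eq: "face_step rot d = face_step rot d'"
  obtain a b a' b' where ab: "d = (a, b)" "d' = (a', b')" by force
  then have "b = b'" "rot b a = rot b a'" using eq unfolding face_step_def by auto
  moreover have "b \<in> V" "a \<in> nbrs E b" "a' \<in> nbrs E b"
    using d d' ab \<open>b = b'\<close> by (auto simp: darts_iff)
  ultimately show "d = d'" using inj_on_rot[OF rs] ab by (auto dest: inj_onD)
qed

lemma finite_darts: "simple_graph V E \<Longrightarrow> finite (darts V E)"
  unfolding simple_graph_def darts_def by (rule finite_subset[of _ "V \<times> V"]) auto

lemma faces_subset_darts:
  assumes sg: "simple_graph V E" and rs: "rotation_system V E rot" and F: "F \<in> faces V E rot"
  shows "F \<subseteq> darts V E"
proof -
  obtain d where d: "d \<in> darts V E" and "F = face_orbit rot d"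
    using F unfolding faces_def by blast
  moreover have "(face_step rot ^^ k) d \<in> darts V E" for k
    by (induction k) (auto intro: face_step_in_darts[OF sg rs] d)
  ultimately show ?thesis unfolding face_orbit_def by blast
qed

lemma face_step_in_face:
  assumes "F \<in> faces V E rot" "d \<in> F"
  shows "face_step rot d \<in> F"
proof -
  obtain d0 k where "F = face_orbit rot d0" "d = (face_step rot ^^ k) d0"
    using assms unfolding faces_def face_orbit_def by blast
  then show ?thesis unfolding face_orbit_def by (auto intro: exI[of _ "Suc k"])
qed

lemma funpow_card_orbit:
  assumes inj: "inj_on g D" and closed: "g ` D \<subseteq> D" and d: "d \<in> D"
    and fin: "finite {(g ^^ j) d | j. True}"
  shows "(g ^^ card {(g ^^ j) d | j. True}) d = d"
proof -
  define Orb where "Orb = {(g ^^ j) d | j. True}"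
  define n where "n = card Orb"
  have iter_D: "(g ^^ i) y \<in> D" if "y \<in> D" for i y
    using that closed by (induction i) auto
  have cancel: "y = y'" if "(g ^^ i) y = (g ^^ i) y'" "y \<in> D" "y' \<in> D" for i y y'
    using that by (induction i) (auto dest: inj_onD[OF inj] intro: iter_D)
  have "\<not> inj_on (\<lambda>j. (g ^^ j) d) {..n}"
  proof
    assume "inj_on (\<lambda>j. (g ^^ j) d) {..n}"
    then have "Suc n = card ((\<lambda>j. (g ^^ j) d) ` {..n})" by (simp add: card_image)
    also have "\<dots> \<le> n" unfolding n_def Orb_def using fin by (intro card_mono) auto
    finally show False by simp
  qed
  then obtain i j where ij: "i < j" "j \<le> n" "(g ^^ i) d = (g ^^ j) d"
    unfolding inj_on_def by (metis atMost_iff nat_neq_iff)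
  define q where "q = j - i"
  have "(g ^^ i) ((g ^^ q) d) = (g ^^ (i + q)) d" by (simp add: funpow_add)
  also have "i + q = j" using ij unfolding q_def by simp
  finally have "(g ^^ i) ((g ^^ q) d) = (g ^^ i) d" using ij(3) by simp
  then have period: "(g ^^ q) d = d" using cancel iter_D d by blast
  have "Orb \<subseteq> (\<lambda>k. (g ^^ k) d) ` {..<q}"
  proof
    fix y assume "y \<in> Orb"
    then obtain m where "y = (g ^^ m) d" unfolding Orb_def by blast
    then have "y = (g ^^ (m mod q)) d" using funpow_mod_eq[OF period] by simp
    then show "y \<in> (\<lambda>k. (g ^^ k) d) ` {..<q}" using ij unfolding q_def by auto
  qed
  then have "n \<le> card ((\<lambda>k. (g ^^ k) d) ` {..<q})" unfolding n_def by (intro card_mono) auto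
  also have "\<dots> \<le> q" using card_image_le[of "{..<q}"] by simp
  finally have "q = n" using ij unfolding q_def by simp
  then show ?thesis using period unfolding n_def Orb_def by simp
qed

lemma periodic_orbit_from_iterate:
  assumes period: "(g ^^ n) d = d" and "0 < n"
  shows "(g ^^ n) ((g ^^ k) d) = (g ^^ k) d"
    and "{(g ^^ j) d | j. True} = (\<lambda>j. (g ^^ j) ((g ^^ k) d)) ` {..<n}"
proof -
  have "(g ^^ n) ((g ^^ k) d) = (g ^^ (n + k)) d" by (simp add: funpow_add)
  also have "\<dots> = (g ^^ (k + n)) d" by (simp only: add.commute)
  also have "\<dots> = (g ^^ k) d" using period by (simp add: funpow_add)
  finally show period_k: "(g ^^ n) ((g ^^ k) d) = (g ^^ k) d" .
  show "{(g ^^ j) d | j. True} = (\<lambda>j. (g ^^ j) ((g ^^ k) d)) ` {..<n}"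
  proof
    show "(\<lambda>j. (g ^^ j) ((g ^^ k) d)) ` {..<n} \<subseteq> {(g ^^ j) d | j. True}"
      using funpow_add[of _ k g] by (auto intro: exI[of _ "_ + k"])
  next
    show "{(g ^^ j) d | j. True} \<subseteq> (\<lambda>j. (g ^^ j) ((g ^^ k) d)) ` {..<n}"
    proof
      fix y assume "y \<in> {(g ^^ j) d | j. True}"
      then obtain m where "y = (g ^^ m) d" by blast
      also have "\<dots> = (g ^^ (m + n * k)) d"
        using funpow_mod_eq[OF period, of m] funpow_mod_eq[OF period, of "m + n * k"] by simp
      also have "\<dots> = (g ^^ ((m + n * k - k) + k)) d" using \<open>0 < n\<close> by (simp add: trans_le_add2)
      also have "\<dots> = (g ^^ (m + n * k - k)) ((g ^^ k) d)" by (simp add: funpow_add)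
      also have "\<dots> = (g ^^ ((m + n * k - k) mod n)) ((g ^^ k) d)"
        using funpow_mod_eq[OF period_k] by simp
      finally show "y \<in> (\<lambda>j. (g ^^ j) ((g ^^ k) d)) ` {..<n}" using \<open>0 < n\<close> by auto
    qed
  qed
qed

lemma face_eq_orbit_of_dart:
  assumes sg: "simple_graph V E" and rs: "rotation_system V E rot"
    and F: "F \<in> faces V E rot" and d: "d \<in> F"
  shows "(face_step rot ^^ card F) d = d"
    and "F = (\<lambda>j. (face_step rot ^^ j) d) ` {..<card F}"
proof -
  obtain d1 where d1: "d1 \<in> darts V E" and F_def: "F = {(face_step rot ^^ j) d1 | j. True}"
    using F unfolding faces_def face_orbit_def by blast
  have "finite F" using finite_subset[OF faces_subset_darts[OF sg rs F] finite_darts[OF sg]] .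
  then have "0 < card F" using d by (auto simp: card_gt_0_iff)
  have "(face_step rot ^^ card F) d1 = d1"
    using funpow_card_orbit[OF inj_on_face_step[OF rs] _ d1] face_step_in_darts[OF sg rs] \<open>finite F\<close>
    unfolding F_def by blast
  note orbit = periodic_orbit_from_iterate[OF this \<open>0 < card F\<close>]
  obtain k where k: "d = (face_step rot ^^ k) d1" using d unfolding F_def by blast
  show "(face_step rot ^^ card F) d = d" unfolding k by (fact orbit(1))
  have "F = {(face_step rot ^^ j) d1 | j. True}" by (fact F_def)
  also have "\<dots> = (\<lambda>j. (face_step rot ^^ j) ((face_step rot ^^ k) d1)) ` {..<card F}" by (fact orbit(2))
  finally show "F = (\<lambda>j. (face_step rot ^^ j) d) ` {..<card F}" unfolding k .
qed

lemma pentagonal_face: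
  assumes sg: "simple_graph V E" and rs: "rotation_system V E rot" and cu: "cubic V E"
    and P: "P \<in> faces V E rot" "card P = 5" and xa: "(x, a) \<in> P"
  obtains b c e where "rot a x = b" "rot b a = c" "rot c b = e" "rot e c = x"
    and "P = {(x, a), (a, b), (b, c), (c, e), (e, x)}" and "distinct [x, a, b, c, e]"
    and "set [x, a, b, c, e] \<subseteq> V"
    and "{x, a} \<in> E" "{a, b} \<in> E" "{b, c} \<in> E" "{c, e} \<in> E" "{e, x} \<in> E"
proof -
  define g where "g = face_step rot"
  define b where "b = rot a x"
  define c where "c = rot b a"
  define e where "e = rot c b"
  have g_simp: "g (u, v) = (v, rot v u)" for u v unfolding g_def face_step_def by simp
  have g4: "(g ^^ 4) (x, a) = (e, rot e c)"
    by (simp add: numeral_eq_Suc g_simp b_def c_def e_def)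
  have period: "(g ^^ 5) (x, a) = (x, a)"
    using face_eq_orbit_of_dart(1)[OF sg rs P(1) xa] P(2) unfolding g_def by simp
  have "(g ^^ 5) (x, a) = g ((g ^^ 4) (x, a))" by (simp add: numeral_eq_Suc)
  also have "\<dots> = (rot e c, rot (rot e c) e)" unfolding g4 g_simp ..
  finally have "(x, a) = (rot e c, rot (rot e c) e)" unfolding period .
  then have rot_ec: "rot e c = x" and rot_xe: "rot x e = a" by simp_all
  have "P = (\<lambda>j. (g ^^ j) (x, a)) ` {0, 1, 2, 3, 4}"
    using face_eq_orbit_of_dart(2)[OF sg rs P(1) xa] P(2) unfolding g_def
    by (simp add: lessThan_nat_numeral lessThan_Suc insert_commute)
  then have P_eq: "P = {(x, a), (a, b), (b, c), (c, e), (e, x)}"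
    using rot_ec by (simp add: numeral_eq_Suc g_simp b_def c_def e_def)
  have "P \<subseteq> darts V E" by (rule faces_subset_darts[OF sg rs P(1)])
  then have darts: "(x, a) \<in> darts V E" "(a, b) \<in> darts V E" "(b, c) \<in> darts V E"
      "(c, e) \<in> darts V E" "(e, x) \<in> darts V E"
    unfolding P_eq by auto
  then have "a \<noteq> x" "b \<noteq> a" "c \<noteq> b" "e \<noteq> c" "x \<noteq> e"
    unfolding darts_def by auto
  moreover have "b \<noteq> x" "c \<noteq> a" "e \<noteq> b" "x \<noteq> c" "a \<noteq> e"
    using rot_neq_self[OF rs] darts cu rot_ec rot_xe
    unfolding b_def c_def e_def cubic_def by (auto simp: darts_iff)
  ultimately have "distinct [x, a, b, c, e]" by auto
  moreover have "set [x, a, b, c, e] \<subseteq> V"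
    and "{x, a} \<in> E" "{a, b} \<in> E" "{b, c} \<in> E" "{c, e} \<in> E" "{e, x} \<in> E"
    using darts unfolding darts_def by simp_all
  ultimately show ?thesis using that b_def c_def e_def rot_ec P_eq by blast
qed

text \<open>Both faces along \<open>bc\<close> leave the cycle: one runs on through \<open>c, e\<close> to \<open>x\<close>; the other
  turns at \<open>b\<close> into its third neighbour, which cannot be on the cycle, since \<open>b\<close> has only two
  neighbours in \<open>U\<close> and they are \<open>a\<close> and \<open>c\<close>.\<close>

lemma cycle_through_pentagon_not_facial:
  assumes rs: "rotation_system V E rot" and cu: "cubic V E"
    and b: "b \<in> V" "a \<in> nbrs E b"
    and rot: "rot b a = c" "rot c b = e" "rot e c = x"
    and vs: "{b, c} \<in> cycle_edges vs" "a \<in> set vs" "x \<notin> set vs" "set vs \<subseteq> U"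
    and deg: "card (nbrs E b \<inter> U) = 2"
  shows "\<not> facial_cycle V E rot vs"
proof
  assume "facial_cycle V E rot vs"
  then obtain F where F: "F \<in> faces V E rot" and edges: "cycle_edges vs = face_edges F"
    unfolding facial_cycle_def by blast
  have on_vs: "w \<in> set vs" if "(u, w) \<in> F" for u w
  proof -
    have "{w, u} \<in> face_edges F" using that unfolding face_edges_def by (force simp: insert_commute)
    then show ?thesis using cycle_edges_memD edges by metis
  qed
  have "{b, c} \<in> face_edges F" using vs(1) edges by simp
  then have "(b, c) \<in> F \<or> (c, b) \<in> F" unfolding face_edges_def by (auto simp: doubleton_eq_iff)
  then show False
  proof
    assume "(b, c) \<in> F"
    then have "(c, e) \<in> F" using face_step_in_face[OF F] rot(2) unfolding face_step_def by fastforce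
    then have "(e, x) \<in> F" using face_step_in_face[OF F] rot(3) unfolding face_step_def by fastforce
    then show False using on_vs vs(3) by blast
  next
    assume "(c, b) \<in> F"
    then have "(b, rot b c) \<in> F" using face_step_in_face[OF F] unfolding face_step_def by fastforce
    have "2 < card (nbrs E b)" using cu b(1) unfolding cubic_def by simp
    then have "c \<noteq> a" "rot b c \<noteq> c" "rot b c \<noteq> a"
      using rot_neq_self[OF rs b] rot_rot_neq_self[OF rs b] rot_neq_self[OF rs b(1) rot_in_nbrs[OF rs b]]
      unfolding rot(1) by auto
    moreover have "c \<in> set vs" using cycle_edges_memD[of c b vs] vs(1) by (simp add: insert_commute)
    then have "a \<in> nbrs E b \<inter> U" "c \<in> nbrs E b \<inter> U" "rot b c \<in> nbrs E b \<inter> U"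
      using rot_in_nbrs[OF rs b] rot_in_nbrs[OF rs b(1) rot_in_nbrs[OF rs b]] b(2) vs(2,4)
        on_vs[OF \<open>(b, rot b c) \<in> F\<close>] unfolding rot(1) by auto
    ultimately show False using card_eq_2_no_three[OF deg] by blast
  qed
qed

section \<open>Perfect star packings\<close>

lemma center_nbrs_eq:
  assumes "S \<subseteq> E" "cubic V E" "c \<in> centers V S"
  shows "nbrs S c = nbrs E c"
proof (rule card_subset_eq)
  have "c \<in> V" "card (nbrs S c) = 3" using assms(3) unfolding centers_def by auto
  then show "card (nbrs S c) = card (nbrs E c)" "finite (nbrs E c)"
    using assms(2) unfolding cubic_def by (auto intro: card_ge_0_finite)
  show "nbrs S c \<subseteq> nbrs E c" using assms(1) unfolding nbrs_def by auto
qed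

lemma component_closed:
  assumes "simple_graph V E" "S \<subseteq> E" "y \<in> component V S v" "{y, z} \<in> S"
  shows "z \<in> component V S v"
proof -
  have "z \<in> V" "y \<noteq> z" using simple_graph_edgeD[OF assms(1), of y z] assms(2,4) by auto
  moreover have "(v, y) \<in> (adj_rel S)\<^sup>*" using assms(3) unfolding component_def by simp
  moreover have "(y, z) \<in> adj_rel S" using assms(4) \<open>y \<noteq> z\<close> unfolding adj_rel_def by simp
  ultimately show ?thesis unfolding component_def by (simp add: rtrancl_into_rtrancl)
qed

lemma star_component_center:
  assumes sg: "simple_graph V E" and cu: "cubic V E"
    and psp: "perfect_star_packing V E S" and v: "v \<in> V"
  obtains c where "c = v \<or> {c, v} \<in> S" and "centers V S \<inter> component V S v = {c}"
proof -
  define W where "W = component V S v"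
  have SE: "S \<subseteq> E" using psp unfolding perfect_star_packing_def by simp
  obtain c where c: "c \<in> W" and card_W: "card W = 4"
    and star: "{e \<in> S. e \<subseteq> W} = {{c, w} | w. w \<in> W - {c}}"
    using psp v unfolding perfect_star_packing_def is_K13_def W_def by blast
  have spoke: "{c, w} \<in> S" if "w \<in> W - {c}" for w using that star by blast
  have "v \<in> W" using v unfolding W_def component_def by simp
  have leaf: "y \<notin> centers V S" if "y \<in> W - {c}" for y
  proof -
    have "nbrs S y \<subseteq> {c}"
    proof
      fix z assume "z \<in> nbrs S y"
      then have "{y, z} \<in> S" "z \<noteq> y" unfolding nbrs_def by auto
      moreover from this have "z \<in> W"
        using component_closed[OF sg SE] that unfolding W_def by blast
      ultimately have "{y, z} \<in> {{c, w} | w. w \<in> W - {c}}" using that star by blast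
      then show "z \<in> {c}" using that \<open>z \<noteq> y\<close> by (auto simp: doubleton_eq_iff)
    qed
    then have "card (nbrs S y) \<le> 1" using card_mono[of "{c}"] by fastforce
    then show ?thesis unfolding centers_def by auto
  qed
  have "c \<in> V" using c unfolding W_def component_def by simp
  have "c \<in> centers V S"
  proof -
    have fin: "finite (nbrs E c)" using cu \<open>c \<in> V\<close> unfolding cubic_def by (auto intro: card_ge_0_finite)
    have sub: "W - {c} \<subseteq> nbrs S c" "nbrs S c \<subseteq> nbrs E c"
      using spoke SE unfolding nbrs_def by auto
    have "card (W - {c}) \<le> card (nbrs S c)" by (rule card_mono[OF finite_subset[OF sub(2) fin] sub(1)])
    moreover have "card (nbrs S c) \<le> card (nbrs E c)" by (rule card_mono[OF fin sub(2)])
    moreover have "card (W - {c}) = 3" using card_W c by (simp add: card_Diff_singleton)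
    moreover have "card (nbrs E c) = 3" using cu \<open>c \<in> V\<close> unfolding cubic_def by simp
    ultimately show ?thesis using \<open>c \<in> V\<close> unfolding centers_def by simp
  qed
  then have "centers V S \<inter> W = {c}" using c leaf by blast
  moreover have "c = v \<or> {c, v} \<in> S" using spoke \<open>v \<in> W\<close> by blast
  ultimately show ?thesis using that unfolding W_def by blast
qed

text \<open>A center adjacent to \<open>v\<close> lies in the star of \<open>v\<close>, as all three of its edges belong to
  the packing.\<close>

lemma ex1_center_in_closed_nbhd:
  assumes sg: "simple_graph V E" and cu: "cubic V E"
    and psp: "perfect_star_packing V E S" and v: "v \<in> V"
  shows "\<exists>!c. c \<in> centers V S \<and> (c = v \<or> {c, v} \<in> E)"
proof -
  have SE: "S \<subseteq> E" using psp unfolding perfect_star_packing_def by simp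
  obtain c where c: "c = v \<or> {c, v} \<in> S" and unique: "centers V S \<inter> component V S v = {c}"
    using star_component_center[OF assms] .
  have "v \<in> component V S v" using v unfolding component_def by simp
  have in_component: "c' \<in> component V S v" if "c' \<in> centers V S" "c' = v \<or> {c', v} \<in> E" for c'
  proof (cases "c' = v")
    case False
    then have "v \<in> nbrs S c'"
      using that center_nbrs_eq[OF SE cu] unfolding nbrs_def by blast
    then have "{v, c'} \<in> S" by (simp add: nbrs_def insert_commute)
    then show ?thesis by (rule component_closed[OF sg SE \<open>v \<in> component V S v\<close>])
  qed (simp add: \<open>v \<in> component V S v\<close>)
  show ?thesis
  proof (rule ex1I)
    show "c \<in> centers V S \<and> (c = v \<or> {c, v} \<in> E)" using c unique SE by blast
    show "c' = c" if "c' \<in> centers V S \<and> (c' = v \<or> {c', v} \<in> E)" for c'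
      using that in_component unique by blast
  qed
qed

lemma center_in_closed_nbhd_unique:
  assumes "simple_graph V E" "cubic V E" "perfect_star_packing V E S" "v \<in> V"
    and "c \<in> centers V S" "c = v \<or> {c, v} \<in> E"
    and "c' \<in> centers V S" "c' = v \<or> {c', v} \<in> E"
  shows "c = c'"
  using ex1_center_in_closed_nbhd[OF assms(1-4)] assms(5-) by blast

lemma card_noncenter_nbrs:
  assumes sg: "simple_graph V E" and cu: "cubic V E"
    and psp: "perfect_star_packing V E S" and v: "v \<in> V - centers V S"
  shows "card (nbrs E v \<inter> (V - centers V S)) = 2"
proof -
  obtain c where c: "c \<in> centers V S" "c = v \<or> {c, v} \<in> E"
    using ex1_center_in_closed_nbhd[OF sg cu psp] v by blast
  then have "c \<in> nbrs E v" using v unfolding nbrs_def by (auto simp: insert_commute)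
  have "nbrs E v \<inter> (V - centers V S) = nbrs E v - {c}"
  proof -
    have "w = c" if "w \<in> nbrs E v" "w \<in> centers V S" for w
      using center_in_closed_nbhd_unique[OF sg cu psp _ that(2) _ c] that(1) v
      unfolding nbrs_def by (auto simp: insert_commute)
    then show ?thesis using nbrs_subset[OF sg] c(1) by blast
  qed
  moreover have "card (nbrs E v) = 3" "finite (nbrs E v)"
    using cu v unfolding cubic_def by (auto intro: card_ge_0_finite)
  ultimately show ?thesis using \<open>c \<in> nbrs E v\<close> by simp
qed

lemma noncenters_near_center:
  assumes sg: "simple_graph V E" and cu: "cubic V E" and psp: "perfect_star_packing V E S"
    and x: "x \<in> centers V S" and edges: "{x, v} \<in> E" "{v, w} \<in> E" and "w \<noteq> x"
  shows "v \<notin> centers V S" "w \<notin> centers V S"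
proof -
  have "v \<in> V" "x \<noteq> v" using simple_graph_edgeD[OF sg edges(1)] by auto
  note unique = center_in_closed_nbhd_unique[OF sg cu psp \<open>v \<in> V\<close> _ _ x]
  show "v \<notin> centers V S" using unique[of v] edges(1) \<open>x \<noteq> v\<close> by auto
  show "w \<notin> centers V S" using unique[of w] edges \<open>w \<noteq> x\<close> by (auto simp: insert_commute)
qed

theorem mainTheorem5:
  fixes V :: "'v set" and E S :: "'v set set" and rot :: "'v \<Rightarrow> 'v \<Rightarrow> 'v"
    and P :: "('v \<times> 'v) set" and x :: 'v
  assumes "fullerene V E rot"
    and "perfect_star_packing V E S"
    and "P \<in> faces V E rot" and "card P = 5"
    and "x \<in> face_verts P" and "x \<in> centers V S"
  shows "\<exists>vs. is_cycle E vs \<and> set vs \<subseteq> V - centers V S \<and>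
            \<not> facial_cycle V E rot vs \<and>
            face_verts P - {x} \<subseteq> set vs \<and>
            {e \<in> face_edges P. x \<notin> e} \<subseteq> cycle_edges vs"
proof -
  let ?C = "centers V S"
  have sg: "simple_graph V E" and rs: "rotation_system V E rot" and cu: "cubic V E"
    using assms(1) unfolding fullerene_def plane_graph_def by blast+
  obtain a where "(x, a) \<in> P" using assms(5) unfolding face_verts_def by force
  then obtain b c e where "rot a x = b" and rot: "rot b a = c" "rot c b = e" "rot e c = x"
    and P: "P = {(x, a), (a, b), (b, c), (c, e), (e, x)}" and distinct: "distinct [x, a, b, c, e]"
    and V: "set [x, a, b, c, e] \<subseteq> V"
    and E: "{x, a} \<in> E" "{a, b} \<in> E" "{b, c} \<in> E" "{c, e} \<in> E" "{e, x} \<in> E"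
    by (rule pentagonal_face[OF sg rs cu assms(3,4)])
  have "{x, e} \<in> E" "{e, c} \<in> E" using E by (simp_all add: insert_commute)
  then have noncenters: "a \<notin> ?C" "b \<notin> ?C" "e \<notin> ?C" "c \<notin> ?C"
    using noncenters_near_center[OF sg cu assms(2,6)] E(1,2) distinct by auto
  have path: "is_path E [e, c, b, a]" "set [e, c, b, a] \<subseteq> V - ?C" "3 \<le> length [e, c, b, a]"
    using E distinct noncenters V unfolding is_path_def by (auto simp: less_Suc_eq insert_commute)
  have "finite (V - ?C)" using sg unfolding simple_graph_def by simp
  then obtain q where cycle: "is_cycle E ([e, c, b, a] @ q)" "set ([e, c, b, a] @ q) \<subseteq> V - ?C"
    using path_extends_to_cycle[OF _ card_noncenter_nbrs[OF sg cu assms(2)] path] by blast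
  define vs where "vs = [e, c, b, a] @ q"
  have cycle_edges: "{e, c} \<in> cycle_edges vs" "{c, b} \<in> cycle_edges vs" "{b, a} \<in> cycle_edges vs"
    using path_edge_in_cycle_edges[of _ vs] unfolding vs_def by fastforce+
  have "b \<in> V" "a \<in> nbrs E b" using V E(2) distinct unfolding nbrs_def by (auto simp: insert_commute)
  moreover have "{b, c} \<in> cycle_edges vs" using cycle_edges(2) by (simp add: insert_commute)
  moreover have "a \<in> set vs" "x \<notin> set vs" "set vs \<subseteq> V - ?C"
    using cycle(2) assms(6) unfolding vs_def by auto
  moreover have "card (nbrs E b \<inter> (V - ?C)) = 2"
    using card_noncenter_nbrs[OF sg cu assms(2)] \<open>b \<in> V\<close> noncenters(2) by blast
  ultimately have "\<not> facial_cycle V E rot vs"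
    using cycle_through_pentagon_not_facial[OF rs cu _ _ rot] by blast
  moreover have "face_verts P - {x} \<subseteq> set vs" "{e \<in> face_edges P. x \<notin> e} \<subseteq> cycle_edges vs"
    using cycle_edges unfolding P face_verts_def face_edges_def vs_def by (auto simp: insert_commute)
  ultimately show ?thesis using cycle unfolding vs_def by blast
qed

end
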